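(* Fix $\alpha\in\mathbb R$, $r\in\mathbb N_0$, and assume (WR$_{\alpha,r}$). Then there is $C_{\alpha,r}>0$ such that for every $f\in\mathcal C^{r+4}_{\alpha,\infty}(\mathbb R^k)$, $$\|Lf\|_{\alpha,r+2}+\|L^2f\|_{\alpha,r}\le C_{\alpha,r}\|f\|_{\alpha,r+4}.$$ In particular $L:\mathcal C^{r+2}_{\alpha,\infty}(\mathbb R^k)\to\mathcal C^r_{\alpha,\infty}(\mathbb R^k)$ is a bounded operator.
   Context: $\mathbb R^k$ Euclidean; $D^jf(x)$ the $j$-th derivative as a symmetric $j$-linear map, $\|\cdot\|$ operator norm. $b=\sigma_0,\dots,\sigma_d:\mathbb R^k\to\mathbb R^k$; $Lf(x)=Df(x)[b(x)]+\frac12\sum_{l=1}^dD^2f(x)[\sigma_l(x),\sigma_l(x)]$. $w_\gamma(x)=(1+|x|^2)^{\gamma/2}$; $\|f\|_{\alpha,k}=\max_{0\le j\le k}\sup_x\|D^jf(x)\|/w_{\alpha-j}(x)$; $\mathcal C^k_{\alpha,\infty}(\mathbb R^k)$ is the space of $f\in C^k$ with $\|f\|_{\alpha,k}<\infty$ and each $\|D^jf\|/w_{\alpha-j}$ ($0\le j\le k$) vanishing at infinity. (WR$_{\alpha,r}$): each $\sigma_j\in C^{r+4}$ with $\|D^q\sigma_j(x)\|\le K_{\alpha,r}w_{1-q}(x)$ for all $x$, $q=0,\dots,r+4$, $j=0..d$, and $D^{r+4}\sigma_j$ globally Hölder of some exponent $\theta\in(0,1)$. *)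

theory Defs
  imports "HOL-Analysis.Analysis"
begin

text \<open>Iterated (Frechet) derivative applied to a list of fixed directions:
  nder f [h1,...,hj] x = D^j f(x)[h1,...,hj].\<close>
fun nder :: "('a::real_normed_vector \<Rightarrow> 'b::real_normed_vector) \<Rightarrow> 'a list \<Rightarrow> 'a \<Rightarrow> 'b" where
  "nder f [] = f"
| "nder f (h # hs) = (\<lambda>x. frechet_derivative (nder f hs) (at x) h)"

fun Ck :: "nat \<Rightarrow> ('a::euclidean_space \<Rightarrow> 'b::real_normed_vector) \<Rightarrow> bool" where
  "Ck 0 f = continuous_on UNIV f"
| "Ck (Suc k) f = ((\<forall>x. f differentiable (at x))
      \<and> continuous_on UNIV (\<lambda>x. Blinfun (frechet_derivative f (at x)))
      \<and> (\<forall>h. Ck k (\<lambda>x. frechet_derivative f (at x) h)))"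

definition mlnorm :: "nat \<Rightarrow> ('a::real_normed_vector list \<Rightarrow> 'b::real_normed_vector) \<Rightarrow> real" where
  "mlnorm j F = (SUP hs \<in> {hs. length hs = j \<and> (\<forall>h\<in>set hs. norm h \<le> 1)}. norm (F hs))"

definition dnorm :: "nat \<Rightarrow> ('a::real_normed_vector \<Rightarrow> 'b::real_normed_vector) \<Rightarrow> 'a \<Rightarrow> real" where
  "dnorm j f x = mlnorm j (\<lambda>hs. nder f hs x)"

definition wt :: "real \<Rightarrow> 'a::real_normed_vector \<Rightarrow> real" where
  "wt \<gamma> x = (1 + (norm x)\<^sup>2) powr (\<gamma> / 2)"

definition wnorm :: "real \<Rightarrow> nat \<Rightarrow> ('a::euclidean_space \<Rightarrow> real) \<Rightarrow> real" where
  "wnorm \<alpha> k f = Max ((\<lambda>j. SUP x. dnorm j f x / wt (\<alpha> - real j) x) ` {0..k})"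

definition Cspace :: "real \<Rightarrow> nat \<Rightarrow> ('a::euclidean_space \<Rightarrow> real) set" where
  "Cspace \<alpha> k = {f. Ck k f
      \<and> (\<forall>j\<le>k. bdd_above (range (\<lambda>x. dnorm j f x / wt (\<alpha> - real j) x)))
      \<and> (\<forall>j\<le>k. ((\<lambda>x. dnorm j f x / wt (\<alpha> - real j) x) \<longlongrightarrow> 0) at_infinity)}"

text \<open>The generator: sigma 0 = b, sigma 1..d the diffusion fields.
  Lf(x) = Df(x)[b(x)] + 1/2 sum_{l=1}^d D^2 f(x)[sigma_l(x), sigma_l(x)].\<close>
definition Lop :: "(nat \<Rightarrow> 'a::euclidean_space \<Rightarrow> 'a) \<Rightarrow> nat \<Rightarrow> ('a \<Rightarrow> real) \<Rightarrow> 'a \<Rightarrow> real" where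
  "Lop \<sigma> d f x = nder f [\<sigma> 0 x] x + 1/2 * (\<Sum>l=1..d. nder f [\<sigma> l x, \<sigma> l x] x)"

definition WR :: "real \<Rightarrow> nat \<Rightarrow> (nat \<Rightarrow> 'a::euclidean_space \<Rightarrow> 'a) \<Rightarrow> nat \<Rightarrow> bool" where
  "WR K r \<sigma> d = (\<forall>j\<le>d.
      Ck (r + 4) (\<sigma> j)
    \<and> (\<forall>q\<le>r + 4. \<forall>x. dnorm q (\<sigma> j) x \<le> K * wt (1 - real q) x)
    \<and> (\<exists>\<theta> H. 0 < \<theta> \<and> \<theta> < 1 \<and> (\<forall>x y.
          mlnorm (r + 4) (\<lambda>hs. nder (\<sigma> j) hs x - nder (\<sigma> j) hs y) \<le> H * dist x y powr \<theta>)))"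

end

theory Submission
  imports Defs
begin

(* In coordinates, L f is a sum of the coefficients sigma_0 . e_b and
   (sigma_l . e_b)(sigma_l . e_c) times the partial derivatives D f[e_b] and D^2 f[e_b, e_c].
   Under (WR) the j-th derivatives of these coefficients are bounded by multiples of w_(1-j)
   and w_(2-j), while for f in C^(m+2)_(alpha,infinity) those of D f[e_b] and D^2 f[e_b, e_c]
   are bounded by |f|_(alpha,m+2) times w_(alpha-1-j) and w_(alpha-2-j). The Leibniz rule
   multiplies such weighted bounds by adding the exponents of the weights, so the j-th
   derivative of L f is bounded by C |f|_(alpha,m+2) w_(alpha-j) for j <= m. The pointwise
   factor in these bounds inherits the decay of f at infinity, so L maps C^(m+2) boundedly
   into C^m for m <= r+2; the cases m = r+2 and m = r together bound L^2. *)

section \<open>The classes \<open>Ck\<close>\<close>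

lemma frechet_derivative_eqI:
  "(f has_derivative f') (at x) \<Longrightarrow> frechet_derivative f (at x) = f'"
  by (metis frechet_derivative_at)

lemma Ck_imp_continuous_on: "Ck n f \<Longrightarrow> continuous_on UNIV f"
  by (cases n) (auto intro!: continuous_at_imp_continuous_on differentiable_imp_continuous_within)

lemma Ck_Suc_iff:
  "Ck (Suc n) f \<longleftrightarrow> (\<exists>D. (\<forall>x. (f has_derivative blinfun_apply (D x)) (at x))
      \<and> continuous_on UNIV D \<and> (\<forall>h. Ck n (\<lambda>x. D x h)))"
proof
  assume f: "Ck (Suc n) f"
  then have "bounded_linear (frechet_derivative f (at x))" for x
    by (auto simp: frechet_derivative_works intro: has_derivative_bounded_linear)
  with f show "\<exists>D. (\<forall>x. (f has_derivative blinfun_apply (D x)) (at x))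
      \<and> continuous_on UNIV D \<and> (\<forall>h. Ck n (\<lambda>x. D x h))"
    by (intro exI[of _ "\<lambda>x. Blinfun (frechet_derivative f (at x))"])
      (simp add: bounded_linear_Blinfun_apply frechet_derivative_works)
next
  assume "\<exists>D. (\<forall>x. (f has_derivative blinfun_apply (D x)) (at x))
      \<and> continuous_on UNIV D \<and> (\<forall>h. Ck n (\<lambda>x. D x h))"
  then obtain D where "\<And>x. (f has_derivative blinfun_apply (D x)) (at x)"
    and "continuous_on UNIV D" and "\<And>h. Ck n (\<lambda>x. D x h)"
    by blast
  moreover from this have "frechet_derivative f (at x) = blinfun_apply (D x)" for x
    by (simp add: frechet_derivative_eqI)
  ultimately show "Ck (Suc n) f"
    by (auto simp: differentiable_def blinfun_apply_inverse)
qed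

lemma Ck_SucI:
  assumes "\<And>x. (f has_derivative blinfun_apply (D x)) (at x)" "continuous_on UNIV D"
    "\<And>h. Ck n (\<lambda>x. D x h)"
  shows "Ck (Suc n) f"
  unfolding Ck_Suc_iff using assms by blast

lemma Ck_SucE:
  assumes "Ck (Suc n) f"
  obtains D where "\<And>x. (f has_derivative blinfun_apply (D x)) (at x)" "continuous_on UNIV D"
    "\<And>h. Ck n (\<lambda>x. D x h)"
  using assms unfolding Ck_Suc_iff by blast

lemma Ck_Suc_imp_Ck: "Ck (Suc n) f \<Longrightarrow> Ck n f"
proof (induction n arbitrary: f)
  case 0
  from Ck_imp_continuous_on[OF this] show ?case by simp
next
  case (Suc n)
  from Suc.prems obtain D where D: "\<And>x. (f has_derivative blinfun_apply (D x)) (at x)"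
    "continuous_on UNIV D" "\<And>h. Ck (Suc n) (\<lambda>x. D x h)"
    by (metis Ck_SucE)
  show ?case by (rule Ck_SucI[OF D(1,2) Suc.IH[OF D(3)]])
qed

lemma Ck_mono: "Ck m f \<Longrightarrow> n \<le> m \<Longrightarrow> Ck n f"
proof (induction m)
  case (Suc m)
  then show ?case using Ck_Suc_imp_Ck le_Suc_eq by blast
qed simp

lemma Ck_const: "Ck n (\<lambda>x. c)"
  by (induction n arbitrary: c) simp_all

lemma Ck_add: "Ck n f \<Longrightarrow> Ck n g \<Longrightarrow> Ck n (\<lambda>x. f x + g x)"
proof (induction n arbitrary: f g)
  case 0
  then show ?case by (simp add: continuous_on_add)
next
  case (Suc n)
  obtain Df where "\<And>x. (f has_derivative blinfun_apply (Df x)) (at x)" "continuous_on UNIV Df"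
    "\<And>h. Ck n (\<lambda>x. Df x h)"
    using Suc.prems(1) by (metis Ck_SucE)
  moreover obtain Dg where "\<And>x. (g has_derivative blinfun_apply (Dg x)) (at x)"
    "continuous_on UNIV Dg" "\<And>h. Ck n (\<lambda>x. Dg x h)"
    using Suc.prems(2) by (metis Ck_SucE)
  ultimately show ?case
    by (intro Ck_SucI[where D = "\<lambda>x. Df x + Dg x"])
      (auto simp: plus_blinfun.rep_eq blinfun.add_left
        intro: has_derivative_add continuous_on_add Suc.IH)
qed

lemma Ck_bounded_linear: "bounded_linear T \<Longrightarrow> Ck n f \<Longrightarrow> Ck n (\<lambda>x. T (f x))"
proof (induction n arbitrary: f)
  case 0
  then show ?case by (auto intro: continuous_on_compose2[OF linear_continuous_on])
next
  case (Suc n)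
  obtain D where D: "\<And>x. (f has_derivative blinfun_apply (D x)) (at x)" "continuous_on UNIV D"
    "\<And>h. Ck n (\<lambda>x. D x h)"
    using Suc.prems(2) by (metis Ck_SucE)
  have "((\<lambda>x. T (f x)) has_derivative blinfun_apply (Blinfun T o\<^sub>L D x)) (at x)" for x
    using bounded_linear.has_derivative[OF Suc.prems(1) D(1)]
    by (simp add: bounded_linear_Blinfun_apply[OF Suc.prems(1)] blinfun_compose.rep_eq o_def)
  moreover have "continuous_on UNIV (\<lambda>x. Blinfun T o\<^sub>L D x)"
    by (rule bounded_bilinear.continuous_on[OF bounded_bilinear_blinfun_compose
          continuous_on_const D(2)])
  moreover have "Ck n (\<lambda>x. (Blinfun T o\<^sub>L D x) h)" for h
    using Suc.IH[OF Suc.prems(1) D(3)] by (simp add: bounded_linear_Blinfun_apply[OF Suc.prems(1)])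
  ultimately show ?case by (rule Ck_SucI)
qed

lemma Ck_mult:
  fixes g u :: "'a::euclidean_space \<Rightarrow> real"
  shows "Ck n g \<Longrightarrow> Ck n u \<Longrightarrow> Ck n (\<lambda>x. g x * u x)"
proof (induction n arbitrary: g u)
  case 0
  then show ?case by (simp add: continuous_on_mult)
next
  case (Suc n)
  obtain Dg where Dg: "\<And>x. (g has_derivative blinfun_apply (Dg x)) (at x)" "continuous_on UNIV Dg"
    "\<And>h. Ck n (\<lambda>x. Dg x h)"
    using Suc.prems(1) by (metis Ck_SucE)
  obtain Du where Du: "\<And>x. (u has_derivative blinfun_apply (Du x)) (at x)" "continuous_on UNIV Du"
    "\<And>h. Ck n (\<lambda>x. Du x h)"
    using Suc.prems(2) by (metis Ck_SucE)
  have "((\<lambda>x. g x * u x) has_derivative blinfun_apply (g x *\<^sub>R Du x + u x *\<^sub>R Dg x)) (at x)" for x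
    using has_derivative_mult[OF Dg(1) Du(1)]
    by (simp add: plus_blinfun.rep_eq scaleR_blinfun.rep_eq mult.commute)
  moreover have "continuous_on UNIV (\<lambda>x. g x *\<^sub>R Du x + u x *\<^sub>R Dg x)"
    using Ck_imp_continuous_on[OF Suc.prems(1)] Ck_imp_continuous_on[OF Suc.prems(2)] Dg(2) Du(2)
    by (intro continuous_on_add continuous_on_scaleR)
  moreover have "Ck n (\<lambda>x. (g x *\<^sub>R Du x + u x *\<^sub>R Dg x) h)" for h
    using Ck_Suc_imp_Ck[OF Suc.prems(1)] Ck_Suc_imp_Ck[OF Suc.prems(2)] Dg(3) Du(3)
    by (simp add: blinfun.add_left blinfun.scaleR_left)
      (intro Ck_add Suc.IH)
  ultimately show ?case by (rule Ck_SucI)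
qed

lemma Ck_sum: "finite I \<Longrightarrow> (\<And>i. i \<in> I \<Longrightarrow> Ck n (F i)) \<Longrightarrow> Ck n (\<lambda>x. \<Sum>i\<in>I. F i x)"
  by (induction I rule: finite_induct) (auto intro!: Ck_add Ck_const)

section \<open>Calculus of iterated derivatives\<close>

lemma nder_append: "nder (nder f ks) hs = nder f (hs @ ks)"
  by (induction hs) auto

lemma nder_zero: "nder (\<lambda>x. 0) hs = (\<lambda>x. 0)"
  by (induction hs) auto

lemma Ck_nder: "Ck n f \<Longrightarrow> length hs \<le> n \<Longrightarrow> Ck (n - length hs) (nder f hs)"
proof (induction hs)
  case (Cons h hs)
  then have "Ck (Suc (n - length (h # hs))) (nder f hs)"
    by (simp add: Suc_diff_Suc)
  then show ?case by simp
qed simp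

lemma has_derivative_nder:
  assumes "Ck n f" "length hs < n"
  shows "(nder f hs has_derivative (\<lambda>h. nder f (h # hs) x)) (at x)"
proof -
  have "Ck (Suc (n - Suc (length hs))) (nder f hs)"
    using Ck_nder[OF assms(1)] assms(2) by (simp add: Suc_diff_Suc)
  then show ?thesis by (simp add: frechet_derivative_works)
qed

lemma nder_Cons_eqI:
  assumes "\<And>x. (nder f hs has_derivative D x) (at x)"
  shows "nder f (h # hs) = (\<lambda>x. D x h)"
  using frechet_derivative_eqI[OF assms] by simp

lemma nder_add:
  "Ck n f \<Longrightarrow> Ck n g \<Longrightarrow> length hs \<le> n \<Longrightarrow>
   nder (\<lambda>x. f x + g x) hs = (\<lambda>x. nder f hs x + nder g hs x)"
proof (induction hs)
  case (Cons h hs)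
  then have IH: "nder (\<lambda>x. f x + g x) hs = (\<lambda>x. nder f hs x + nder g hs x)"
    by simp
  have "(nder (\<lambda>x. f x + g x) hs has_derivative
      (\<lambda>h. nder f (h # hs) x + nder g (h # hs) x)) (at x)" for x
    unfolding IH using Cons.prems by (intro has_derivative_add has_derivative_nder[of n]) auto
  from nder_Cons_eqI[OF this] show ?case by simp
qed simp

lemma nder_bounded_linear:
  "bounded_linear T \<Longrightarrow> Ck n f \<Longrightarrow> length hs \<le> n \<Longrightarrow>
   nder (\<lambda>x. T (f x)) hs = (\<lambda>x. T (nder f hs x))"
proof (induction hs)
  case (Cons h hs)
  then have IH: "nder (\<lambda>x. T (f x)) hs = (\<lambda>x. T (nder f hs x))"
    by simp
  have "(nder (\<lambda>x. T (f x)) hs has_derivative (\<lambda>h. T (nder f (h # hs) x))) (at x)" for x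
    unfolding IH using Cons.prems
    by (intro bounded_linear.has_derivative[OF Cons.prems(1)] has_derivative_nder[of n]) auto
  from nder_Cons_eqI[OF this] show ?case by simp
qed simp

lemma nder_sum:
  "finite I \<Longrightarrow> (\<And>i. i \<in> I \<Longrightarrow> Ck n (F i)) \<Longrightarrow> length hs \<le> n \<Longrightarrow>
   nder (\<lambda>x. \<Sum>i\<in>I. F i x) hs = (\<lambda>x. \<Sum>i\<in>I. nder (F i) hs x)"
proof (induction I rule: finite_induct)
  case (insert i I)
  have "Ck n (F i)" "Ck n (\<lambda>x. \<Sum>i\<in>I. F i x)"
    using insert.prems(1) by (auto intro!: Ck_sum[OF insert.hyps(1)])
  then have "nder (\<lambda>x. F i x + (\<Sum>i\<in>I. F i x)) hs
      = (\<lambda>x. nder (F i) hs x + nder (\<lambda>x. \<Sum>i\<in>I. F i x) hs x)"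
    using insert.prems(2) by (rule nder_add)
  moreover have "nder (\<lambda>x. \<Sum>i\<in>I. F i x) hs = (\<lambda>x. \<Sum>i\<in>I. nder (F i) hs x)"
    using insert.IH insert.prems by blast
  ultimately show ?case
    using insert.hyps by simp
qed (simp add: nder_zero)

lemma nder_Cons_basis_expansion:
  assumes "Ck n f" "length hs < n"
  shows "nder f (v # hs) x = (\<Sum>b\<in>Basis. (v \<bullet> b) *\<^sub>R nder f (b # hs) x)"
proof -
  have "linear (\<lambda>h. nder f (h # hs) x)"
    using has_derivative_nder[OF assms] by (rule has_derivative_linear)
  then show ?thesis
    by (subst euclidean_representation[symmetric, of v]) (simp add: linear_sum linear_scale)
qed

lemma nder_snoc_basis_expansion:
  assumes f: "Ck n f" and hs: "length hs < n"
  shows "nder f (hs @ [v]) x = (\<Sum>b\<in>Basis. (v \<bullet> b) *\<^sub>R nder f (hs @ [b]) x)"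
proof -
  let ?g = "\<lambda>b y. (v \<bullet> b) *\<^sub>R nder f [b] y"
  have Ck_b: "Ck (n - 1) (nder f [b])" for b
    using Ck_nder[OF f, of "[b]"] hs by simp
  have "nder f [v] = (\<lambda>y. \<Sum>b\<in>Basis. ?g b y)"
    using hs by (intro ext nder_Cons_basis_expansion[OF f]) simp
  then have "nder f (hs @ [v]) x = nder (\<lambda>y. \<Sum>b\<in>Basis. ?g b y) hs x"
    by (simp only: nder_append[symmetric])
  also have "\<dots> = (\<Sum>b\<in>Basis. nder (?g b) hs x)"
    using nder_sum[of Basis "n - 1" ?g hs] Ck_bounded_linear[OF bounded_linear_scaleR_right Ck_b] hs
    by simp
  also have "\<dots> = (\<Sum>b\<in>Basis. (v \<bullet> b) *\<^sub>R nder (nder f [b]) hs x)"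
    using nder_bounded_linear[OF bounded_linear_scaleR_right Ck_b] hs by simp
  finally show ?thesis by (simp only: nder_append)
qed

fun complementary_subseqs :: "'a list \<Rightarrow> ('a list \<times> 'a list) list" where
  "complementary_subseqs [] = [([], [])]"
| "complementary_subseqs (h # hs) =
    map (\<lambda>(a, b). (h # a, b)) (complementary_subseqs hs) @
    map (\<lambda>(a, b). (a, h # b)) (complementary_subseqs hs)"

lemma length_complementary_subseqs: "length (complementary_subseqs hs) = 2 ^ length hs"
  by (induction hs) auto

lemma complementary_subseqsD:
  "(a, b) \<in> set (complementary_subseqs hs) \<Longrightarrow>
    set a \<subseteq> set hs \<and> set b \<subseteq> set hs \<and> length a + length b = length hs"
proof (induction hs arbitrary: a b)
  case (Cons h hs)
  then obtain a' b' where "(a', b') \<in> set (complementary_subseqs hs)"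
    and "(a = h # a' \<and> b = b') \<or> (a = a' \<and> b = h # b')"
    by auto
  with Cons.IH[of a' b'] show ?case by auto
qed simp

lemma has_derivative_sum_list:
  "(\<And>p. p \<in> set ps \<Longrightarrow> (F p has_derivative F' p) (at x)) \<Longrightarrow>
   ((\<lambda>x. \<Sum>p\<leftarrow>ps. F p x) has_derivative (\<lambda>h. \<Sum>p\<leftarrow>ps. F' p h)) (at x)"
  by (induction ps) (auto intro!: has_derivative_add)

lemma nder_mult:
  fixes g u :: "'a::euclidean_space \<Rightarrow> real"
  assumes "Ck n g" "Ck n u" "length hs \<le> n"
  shows "nder (\<lambda>x. g x * u x) hs = (\<lambda>x. \<Sum>(a, b)\<leftarrow>complementary_subseqs hs. nder g a x * nder u b x)"
  using assms(3)
proof (induction hs)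
  case (Cons h hs)
  then have IH: "nder (\<lambda>x. g x * u x) hs
      = (\<lambda>x. \<Sum>(a, b)\<leftarrow>complementary_subseqs hs. nder g a x * nder u b x)"
    by simp
  have "(nder (\<lambda>x. g x * u x) hs has_derivative (\<lambda>h. \<Sum>(a, b)\<leftarrow>complementary_subseqs hs.
      nder g a x * nder u (h # b) x + nder g (h # a) x * nder u b x)) (at x)" for x
    unfolding IH split_def
    using Cons.prems complementary_subseqsD
    by (intro has_derivative_sum_list has_derivative_mult has_derivative_nder[OF assms(1)]
        has_derivative_nder[OF assms(2)]) fastforce+
  from nder_Cons_eqI[OF this] show ?case
    by (simp add: sum_list_addf split_def o_def add.commute)
qed simp

section \<open>Operator norms and weights\<close>

(* mlnorm is a SUP in a conditionally complete lattice: it dominates the values only once they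
   are known to be bounded. *)
lemma nder_bounded_unit_directions:
  assumes "Ck n f" "j \<le> n"
  shows "\<exists>B. \<forall>hs. length hs = j \<longrightarrow> (\<forall>h\<in>set hs. norm h \<le> 1) \<longrightarrow> norm (nder f hs x) \<le> B"
  using assms
proof (induction j arbitrary: n f)
  case 0
  then show ?case by auto
next
  case (Suc j)
  have Ck_b: "Ck (n - 1) (nder f [b])" for b
    using Ck_nder[OF Suc.prems(1), of "[b]"] Suc.prems(2) by simp
  have "\<exists>B. \<forall>hs. length hs = j \<longrightarrow> (\<forall>h\<in>set hs. norm h \<le> 1) \<longrightarrow>
      norm (nder (nder f [b]) hs x) \<le> B" for b
    using Suc.IH[OF Ck_b] Suc.prems(2) by simp
  then obtain B where B: "\<And>b hs. length hs = j \<Longrightarrow> \<forall>h\<in>set hs. norm h \<le> 1 \<Longrightarrow>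
      norm (nder (nder f [b]) hs x) \<le> B b"
    by metis
  have "norm (nder f hs x) \<le> (\<Sum>b\<in>Basis. B b)"
    if hs: "length hs = Suc j" "\<forall>h\<in>set hs. norm h \<le> 1" for hs
  proof -
    obtain ks h where hs_eq: "hs = ks @ [h]"
      using hs(1) by (metis length_Suc_conv_rev)
    with hs have ks: "length ks = j" "\<forall>h\<in>set ks. norm h \<le> 1" and h: "norm h \<le> 1"
      by auto
    have "norm (nder f hs x) = norm (\<Sum>b\<in>Basis. (h \<bullet> b) *\<^sub>R nder (nder f [b]) ks x)"
      unfolding hs_eq nder_append
      using nder_snoc_basis_expansion[OF Suc.prems(1)] ks(1) Suc.prems(2) by simp
    also have "\<dots> \<le> (\<Sum>b\<in>Basis. \<bar>h \<bullet> b\<bar> * norm (nder (nder f [b]) ks x))"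
      by (rule order_trans[OF norm_sum]) simp
    also have "\<dots> \<le> (\<Sum>b\<in>Basis. 1 * B b)"
      using h B[OF ks] Basis_le_norm[of _ h]
      by (intro sum_mono mult_mono) (auto intro: order_trans)
    finally show ?thesis by simp
  qed
  then show ?case by blast
qed

lemma nder_le_dnorm:
  assumes "Ck n f" "length hs \<le> n" "\<forall>h\<in>set hs. norm h \<le> 1"
  shows "norm (nder f hs x) \<le> dnorm (length hs) f x"
proof -
  obtain B where "\<And>ks. length ks = length hs \<Longrightarrow> \<forall>h\<in>set ks. norm h \<le> 1 \<Longrightarrow> norm (nder f ks x) \<le> B"
    using nder_bounded_unit_directions[OF assms(1,2)] by blast
  with assms(3) show ?thesis
    unfolding dnorm_def mlnorm_def by (intro cSUP_upper bdd_aboveI2) auto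
qed

lemma dnorm_le:
  assumes "\<And>hs. length hs = j \<Longrightarrow> \<forall>h\<in>set hs. norm h \<le> 1 \<Longrightarrow> norm (nder f hs x) \<le> M"
  shows "dnorm j f x \<le> M"
proof -
  have "\<exists>hs. length hs = j \<and> (\<forall>h\<in>set hs. norm h \<le> 1)"
    by (intro exI[of _ "replicate j 0"]) simp
  with assms show ?thesis
    unfolding dnorm_def mlnorm_def by (intro cSUP_least) auto
qed

lemma dnorm_nonneg: "Ck n f \<Longrightarrow> j \<le> n \<Longrightarrow> 0 \<le> dnorm j f x"
  using nder_le_dnorm[of n f "replicate j 0" x] by (auto intro: order_trans[OF norm_ge_zero])

lemma wt_pos: "0 < wt p x"
proof -
  have "0 < 1 + (norm x)\<^sup>2"
    by (simp add: add_pos_nonneg)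
  then show ?thesis unfolding wt_def by simp
qed

lemma wt_nonneg: "0 \<le> wt p x"
  using wt_pos less_imp_le by blast

lemma wt_mult: "wt p x * wt q x = wt (p + q) x"
  unfolding wt_def by (simp add: powr_add[symmetric] add_divide_distrib)

section \<open>Weighted derivative bounds\<close>

(* The factor E is a function of x so that the bound keeps track of decay at infinity. *)
definition deriv_bound ::
    "nat \<Rightarrow> ('a::euclidean_space \<Rightarrow> 'b::real_normed_vector) \<Rightarrow> real \<Rightarrow> ('a \<Rightarrow> real) \<Rightarrow> bool" where
  "deriv_bound n f p E \<longleftrightarrow> Ck n f \<and> (\<forall>hs x. length hs \<le> n \<longrightarrow> (\<forall>h\<in>set hs. norm h \<le> 1) \<longrightarrow>
      norm (nder f hs x) \<le> E x * wt (p - real (length hs)) x)"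

lemma deriv_boundI:
  assumes "Ck n f"
    and "\<And>hs x. length hs \<le> n \<Longrightarrow> \<forall>h\<in>set hs. norm h \<le> 1 \<Longrightarrow>
      norm (nder f hs x) \<le> E x * wt (p - real (length hs)) x"
  shows "deriv_bound n f p E"
  using assms unfolding deriv_bound_def by blast

lemma deriv_boundD:
  assumes "deriv_bound n f p E"
  shows "Ck n f"
    and "length hs \<le> n \<Longrightarrow> \<forall>h\<in>set hs. norm h \<le> 1 \<Longrightarrow>
      norm (nder f hs x) \<le> E x * wt (p - real (length hs)) x"
  using assms unfolding deriv_bound_def by blast+

lemma deriv_bound_mono:
  fixes f :: "'a::euclidean_space \<Rightarrow> 'b::real_normed_vector"
  assumes "deriv_bound n f p E" "m \<le> n" "\<And>x. E x \<le> E' x"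
  shows "deriv_bound m f p E'"
proof (rule deriv_boundI)
  show "Ck m f"
    using Ck_mono deriv_boundD(1)[OF assms(1)] assms(2) by blast
  fix hs :: "'a list" and x :: 'a
  assume "length hs \<le> m" "\<forall>h\<in>set hs. norm h \<le> 1"
  with assms(2) have "norm (nder f hs x) \<le> E x * wt (p - real (length hs)) x"
    by (intro deriv_boundD(2)[OF assms(1)]) auto
  also have "\<dots> \<le> E' x * wt (p - real (length hs)) x"
    using assms(3) wt_nonneg by (rule mult_right_mono)
  finally show "norm (nder f hs x) \<le> E' x * wt (p - real (length hs)) x" .
qed

lemma deriv_bound_zero: "deriv_bound n (\<lambda>x. 0) p (\<lambda>x. 0)"
  by (rule deriv_boundI) (simp_all add: Ck_const nder_zero)

lemma deriv_bound_add:
  fixes f g :: "'a::euclidean_space \<Rightarrow> 'b::real_normed_vector"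
  assumes f: "deriv_bound n f p A" and g: "deriv_bound n g p B"
  shows "deriv_bound n (\<lambda>x. f x + g x) p (\<lambda>x. A x + B x)"
proof (rule deriv_boundI)
  show "Ck n (\<lambda>x. f x + g x)"
    using deriv_boundD(1)[OF f] deriv_boundD(1)[OF g] by (rule Ck_add)
  fix hs :: "'a list" and x :: 'a
  assume hs: "length hs \<le> n" "\<forall>h\<in>set hs. norm h \<le> 1"
  have "norm (nder (\<lambda>x. f x + g x) hs x) = norm (nder f hs x + nder g hs x)"
    using nder_add[OF deriv_boundD(1)[OF f] deriv_boundD(1)[OF g] hs(1)] by simp
  also have "\<dots> \<le> A x * wt (p - real (length hs)) x + B x * wt (p - real (length hs)) x"
    using deriv_boundD(2)[OF f hs] deriv_boundD(2)[OF g hs] by (intro norm_triangle_le add_mono)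
  finally show "norm (nder (\<lambda>x. f x + g x) hs x) \<le> (A x + B x) * wt (p - real (length hs)) x"
    by (simp add: distrib_right)
qed

lemma deriv_bound_sum:
  "finite I \<Longrightarrow> (\<And>i. i \<in> I \<Longrightarrow> deriv_bound n (F i) p (A i)) \<Longrightarrow>
   deriv_bound n (\<lambda>x. \<Sum>i\<in>I. F i x) p (\<lambda>x. \<Sum>i\<in>I. A i x)"
  by (induction I rule: finite_induct) (simp_all add: deriv_bound_zero deriv_bound_add)

lemma deriv_bound_bounded_linear:
  fixes f :: "'a::euclidean_space \<Rightarrow> 'b::real_normed_vector" and T :: "'b \<Rightarrow> 'c::real_normed_vector"
  assumes T: "bounded_linear T" and T_le: "\<And>v. norm (T v) \<le> c * norm v" and c: "0 \<le> c"
    and f: "deriv_bound n f p A"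
  shows "deriv_bound n (\<lambda>x. T (f x)) p (\<lambda>x. c * A x)"
proof (rule deriv_boundI)
  show "Ck n (\<lambda>x. T (f x))"
    using T deriv_boundD(1)[OF f] by (rule Ck_bounded_linear)
  fix hs :: "'a list" and x :: 'a
  assume hs: "length hs \<le> n" "\<forall>h\<in>set hs. norm h \<le> 1"
  have "norm (nder (\<lambda>x. T (f x)) hs x) = norm (T (nder f hs x))"
    using nder_bounded_linear[OF T deriv_boundD(1)[OF f] hs(1)] by simp
  also have "\<dots> \<le> c * (A x * wt (p - real (length hs)) x)"
    using T_le deriv_boundD(2)[OF f hs] c by (rule order_trans[OF _ mult_left_mono])
  finally show "norm (nder (\<lambda>x. T (f x)) hs x) \<le> c * A x * wt (p - real (length hs)) x"
    by (simp add: mult.assoc)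
qed

lemma deriv_bound_scale:
  fixes f :: "'a::euclidean_space \<Rightarrow> real"
  shows "deriv_bound n f p A \<Longrightarrow> deriv_bound n (\<lambda>x. c * f x) p (\<lambda>x. \<bar>c\<bar> * A x)"
  by (rule deriv_bound_bounded_linear) (auto simp: bounded_linear_mult_right abs_mult)

lemma deriv_bound_inner:
  assumes "deriv_bound n f p A" "norm b \<le> 1"
  shows "deriv_bound n (\<lambda>x. f x \<bullet> b) p A"
proof -
  have "norm (v \<bullet> b) \<le> 1 * norm v" for v
    using Cauchy_Schwarz_ineq2[of v b] assms(2) mult_left_le[of "norm b" "norm v"] by simp
  with assms(1) have "deriv_bound n (\<lambda>x. f x \<bullet> b) p (\<lambda>x. 1 * A x)"
    by (intro deriv_bound_bounded_linear bounded_linear_inner_left) auto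
  then show ?thesis by simp
qed

lemma deriv_bound_mult:
  fixes g u :: "'a::euclidean_space \<Rightarrow> real"
  assumes g: "deriv_bound n g p A" and u: "deriv_bound n u q B"
    and A: "\<And>x. 0 \<le> A x" and B: "\<And>x. 0 \<le> B x"
  shows "deriv_bound n (\<lambda>x. g x * u x) (p + q) (\<lambda>x. 2 ^ n * (A x * B x))"
proof (rule deriv_boundI)
  show "Ck n (\<lambda>x. g x * u x)"
    using deriv_boundD(1)[OF g] deriv_boundD(1)[OF u] by (rule Ck_mult)
  fix hs :: "'a list" and x :: 'a
  assume hs: "length hs \<le> n" "\<forall>h\<in>set hs. norm h \<le> 1"
  let ?w = "wt (p + q - real (length hs)) x"
  have term_le: "\<bar>nder g a x * nder u b x\<bar> \<le> A x * B x * ?w"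
    if "(a, b) \<in> set (complementary_subseqs hs)" for a b
  proof -
    have ab: "set a \<subseteq> set hs" "set b \<subseteq> set hs" "length a + length b = length hs"
      using complementary_subseqsD[OF that] by auto
    then have "\<bar>nder g a x * nder u b x\<bar>
        \<le> (A x * wt (p - real (length a)) x) * (B x * wt (q - real (length b)) x)"
      unfolding abs_mult using hs A B
      by (intro mult_mono deriv_boundD(2)[OF g, simplified] deriv_boundD(2)[OF u, simplified])
        (auto intro!: mult_nonneg_nonneg wt_nonneg)
    also have "\<dots> = A x * B x * ?w"
      using ab(3) by (simp add: wt_mult algebra_simps flip: of_nat_add)
    finally show ?thesis .
  qed
  have "norm (nder (\<lambda>x. g x * u x) hs x)
      = \<bar>\<Sum>(a, b)\<leftarrow>complementary_subseqs hs. nder g a x * nder u b x\<bar>"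
    using nder_mult[OF deriv_boundD(1)[OF g] deriv_boundD(1)[OF u] hs(1)] by simp
  also have "\<dots> \<le> (\<Sum>(a, b)\<leftarrow>complementary_subseqs hs. \<bar>nder g a x * nder u b x\<bar>)"
    using sum_list_abs[of "map (\<lambda>(a, b). nder g a x * nder u b x) (complementary_subseqs hs)"]
    by (simp add: o_def case_prod_unfold)
  also have "\<dots> \<le> (\<Sum>_\<leftarrow>complementary_subseqs hs. A x * B x * ?w)"
    using term_le by (intro sum_list_mono) (clarsimp split: prod.splits)
  also have "\<dots> = 2 ^ length hs * (A x * B x) * ?w"
    by (simp add: sum_list_triv length_complementary_subseqs)
  also have "\<dots> \<le> 2 ^ n * (A x * B x) * ?w"
    using hs(1) A[of x] B[of x] wt_nonneg
    by (intro mult_right_mono power_increasing) auto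
  finally show "norm (nder (\<lambda>x. g x * u x) hs x) \<le> 2 ^ n * (A x * B x) * ?w" .
qed

lemma deriv_bound_nder:
  fixes f :: "'a::euclidean_space \<Rightarrow> 'b::real_normed_vector"
  assumes "deriv_bound (Suc n) f p E" "norm e \<le> 1"
  shows "deriv_bound n (nder f [e]) (p - 1) E"
proof (rule deriv_boundI)
  show "Ck n (nder f [e])"
    using Ck_nder[OF deriv_boundD(1)[OF assms(1)], of "[e]"] by simp
  fix hs :: "'a list" and x :: 'a
  assume "length hs \<le> n" "\<forall>h\<in>set hs. norm h \<le> 1"
  with assms have "norm (nder f (hs @ [e]) x) \<le> E x * wt (p - real (length (hs @ [e]))) x"
    by (intro deriv_boundD(2)) auto
  then show "norm (nder (nder f [e]) hs x) \<le> E x * wt (p - 1 - real (length hs)) x"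
    by (simp only: nder_append) (simp add: algebra_simps)
qed

definition pointwise_wnorm :: "real \<Rightarrow> nat \<Rightarrow> ('a::euclidean_space \<Rightarrow> real) \<Rightarrow> 'a \<Rightarrow> real" where
  "pointwise_wnorm \<alpha> n f x = (\<Sum>j\<le>n. dnorm j f x / wt (\<alpha> - real j) x)"

lemma Cspace_Ck: "f \<in> Cspace \<alpha> n \<Longrightarrow> Ck n f"
  unfolding Cspace_def by blast

lemma pointwise_wnorm_nonneg: "f \<in> Cspace \<alpha> n \<Longrightarrow> 0 \<le> pointwise_wnorm \<alpha> n f x"
  unfolding pointwise_wnorm_def
  by (intro sum_nonneg divide_nonneg_pos dnorm_nonneg[OF Cspace_Ck] wt_pos) auto

lemma Cspace_deriv_bound:
  assumes f: "f \<in> Cspace \<alpha> n"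
  shows "deriv_bound n f \<alpha> (pointwise_wnorm \<alpha> n f)"
proof (rule deriv_boundI)
  show "Ck n f" using Cspace_Ck[OF f] .
  fix hs :: "'a list" and x :: 'a
  assume hs: "length hs \<le> n" "\<forall>h\<in>set hs. norm h \<le> 1"
  let ?w = "wt (\<alpha> - real (length hs)) x"
  have "dnorm (length hs) f x / ?w \<le> pointwise_wnorm \<alpha> n f x"
    unfolding pointwise_wnorm_def using hs(1)
    by (intro member_le_sum[where f = "\<lambda>j. dnorm j f x / wt (\<alpha> - real j) x", simplified]
        divide_nonneg_pos dnorm_nonneg[OF Cspace_Ck[OF f]] wt_pos) auto
  then have "dnorm (length hs) f x \<le> pointwise_wnorm \<alpha> n f x * ?w"
    by (simp add: divide_le_eq wt_pos)
  with nder_le_dnorm[OF Cspace_Ck[OF f] hs, of x]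
  show "norm (nder f hs x) \<le> pointwise_wnorm \<alpha> n f x * ?w"
    by linarith
qed

lemma pointwise_wnorm_le_wnorm:
  assumes f: "f \<in> Cspace \<alpha> n"
  shows "pointwise_wnorm \<alpha> n f x \<le> real (n + 1) * wnorm \<alpha> n f"
proof -
  have "dnorm j f x / wt (\<alpha> - real j) x \<le> wnorm \<alpha> n f" if "j \<le> n" for j
  proof -
    have "dnorm j f x / wt (\<alpha> - real j) x \<le> (SUP x. dnorm j f x / wt (\<alpha> - real j) x)"
      using f that unfolding Cspace_def by (intro cSUP_upper) auto
    also have "\<dots> \<le> wnorm \<alpha> n f"
      unfolding wnorm_def using that by (intro Max_ge) auto
    finally show ?thesis .
  qed
  then have "pointwise_wnorm \<alpha> n f x \<le> real (card {..n}) * wnorm \<alpha> n f"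
    unfolding pointwise_wnorm_def by (intro sum_bounded_above) auto
  then show ?thesis by simp
qed

lemma wnorm_nonneg:
  assumes f: "f \<in> Cspace \<alpha> n"
  shows "0 \<le> wnorm \<alpha> n f"
proof -
  have "0 \<le> real (n + 1) * wnorm \<alpha> n f"
    using order_trans[OF pointwise_wnorm_nonneg[OF f] pointwise_wnorm_le_wnorm[OF f]] .
  then show ?thesis by (simp add: zero_le_mult_iff)
qed

lemma tendsto_pointwise_wnorm:
  "f \<in> Cspace \<alpha> n \<Longrightarrow> (pointwise_wnorm \<alpha> n f \<longlongrightarrow> 0) at_infinity"
  unfolding pointwise_wnorm_def[abs_def] Cspace_def by (intro tendsto_null_sum) auto

lemma deriv_bound_imp_Cspace:
  fixes g :: "'a::euclidean_space \<Rightarrow> real"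
  assumes g: "deriv_bound n g \<alpha> (\<lambda>x. c * E x)" and c: "0 \<le> c"
    and E: "\<And>x. 0 \<le> E x" "\<And>x. E x \<le> M" "(E \<longlongrightarrow> 0) at_infinity"
  shows "g \<in> Cspace \<alpha> n" "wnorm \<alpha> n g \<le> c * M"
proof -
  have ratio: "0 \<le> dnorm j g x / wt (\<alpha> - real j) x \<and> dnorm j g x / wt (\<alpha> - real j) x \<le> c * E x"
    if "j \<le> n" for j x
  proof -
    have "dnorm j g x \<le> c * E x * wt (\<alpha> - real j) x"
      by (intro dnorm_le) (use that deriv_boundD(2)[OF g] in auto)
    with dnorm_nonneg[OF deriv_boundD(1)[OF g] that] show ?thesis
      by (auto simp: divide_le_eq wt_pos intro: divide_nonneg_pos)
  qed
  have cE_le: "c * E x \<le> c * M" for x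
    using E(2) c by (rule mult_left_mono)
  have "((\<lambda>x. dnorm j g x / wt (\<alpha> - real j) x) \<longlongrightarrow> 0) at_infinity" if "j \<le> n" for j
  proof (rule tendsto_sandwich[of "\<lambda>_. 0" _ _ "\<lambda>x. c * E x"])
    show "((\<lambda>x. c * E x) \<longlongrightarrow> 0) at_infinity"
      using tendsto_mult_right_zero[OF E(3)] .
  qed (use ratio[OF that] in auto)
  moreover have "bdd_above (range (\<lambda>x. dnorm j g x / wt (\<alpha> - real j) x))" if "j \<le> n" for j
    using ratio[OF that] cE_le by (intro bdd_aboveI2[where M = "c * M"]) (auto intro: order_trans)
  ultimately show "g \<in> Cspace \<alpha> n"
    unfolding Cspace_def using deriv_boundD(1)[OF g] by blast
  have "(SUP x. dnorm j g x / wt (\<alpha> - real j) x) \<le> c * M" if "j \<le> n" for j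
    using ratio[OF that] cE_le by (intro cSUP_least) (auto intro: order_trans)
  then show "wnorm \<alpha> n g \<le> c * M"
    unfolding wnorm_def by (subst Max_le_iff) auto
qed

section \<open>The generator\<close>

lemma nder_two_basis_expansion:
  assumes "Ck 2 f"
  shows "nder f [v, w] x = (\<Sum>b\<in>Basis. \<Sum>c\<in>Basis. ((v \<bullet> b) * (w \<bullet> c)) *\<^sub>R nder f [b, c] x)"
proof -
  have "nder f [v, w] x = (\<Sum>b\<in>Basis. (v \<bullet> b) *\<^sub>R nder f [b, w] x)"
    using nder_Cons_basis_expansion[OF assms, of "[w]" v x] by simp
  also have "\<dots> = (\<Sum>b\<in>Basis. (v \<bullet> b) *\<^sub>R (\<Sum>c\<in>Basis. (w \<bullet> c) *\<^sub>R nder f [b, c] x))"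
    using nder_snoc_basis_expansion[OF assms, of "[_]" w x] by simp
  finally show ?thesis
    by (simp add: scaleR_sum_right)
qed

lemma Lop_basis_expansion:
  fixes f :: "'a::euclidean_space \<Rightarrow> real"
  assumes "Ck 2 f"
  shows "Lop \<sigma> d f = (\<lambda>x. (\<Sum>b\<in>Basis. (\<sigma> 0 x \<bullet> b) * nder f [b] x) +
     1/2 * (\<Sum>l=1..d. \<Sum>b\<in>Basis. \<Sum>c\<in>Basis. ((\<sigma> l x \<bullet> b) * (\<sigma> l x \<bullet> c)) * nder f [b, c] x))"
proof
  fix x
  have "nder f [\<sigma> 0 x] x = (\<Sum>b\<in>Basis. (\<sigma> 0 x \<bullet> b) * nder f [b] x)"
    using nder_Cons_basis_expansion[OF assms, of "[]" "\<sigma> 0 x" x] by simp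
  then show "Lop \<sigma> d f x = (\<Sum>b\<in>Basis. (\<sigma> 0 x \<bullet> b) * nder f [b] x) +
     1/2 * (\<Sum>l=1..d. \<Sum>b\<in>Basis. \<Sum>c\<in>Basis. ((\<sigma> l x \<bullet> b) * (\<sigma> l x \<bullet> c)) * nder f [b, c] x)"
    unfolding Lop_def nder_two_basis_expansion[OF assms, of "\<sigma> l x" "\<sigma> l x" x for l]
    by simp
qed

lemma WR_deriv_bound:
  fixes \<sigma> :: "nat \<Rightarrow> 'a::euclidean_space \<Rightarrow> 'a"
  assumes "WR K r \<sigma> d" "j \<le> d"
  shows "deriv_bound (r + 4) (\<sigma> j) 1 (\<lambda>_. K)"
proof (rule deriv_boundI)
  show Ck: "Ck (r + 4) (\<sigma> j)"
    using assms unfolding WR_def by blast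
  fix hs :: "'a list" and x :: 'a
  assume hs: "length hs \<le> r + 4" "\<forall>h\<in>set hs. norm h \<le> 1"
  have "norm (nder (\<sigma> j) hs x) \<le> dnorm (length hs) (\<sigma> j) x"
    using Ck hs by (rule nder_le_dnorm)
  also have "\<dots> \<le> K * wt (1 - real (length hs)) x"
    using assms hs(1) unfolding WR_def by blast
  finally show "norm (nder (\<sigma> j) hs x) \<le> K * wt (1 - real (length hs)) x" .
qed

lemma WR_nonneg:
  fixes \<sigma> :: "nat \<Rightarrow> 'a::euclidean_space \<Rightarrow> 'a"
  assumes "WR K r \<sigma> d"
  shows "0 \<le> K"
proof -
  have "norm (\<sigma> 0 0) \<le> K * wt 1 (0::'a)"
    using deriv_boundD(2)[OF WR_deriv_bound[OF assms], of 0 "[]"] by simp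
  then have "0 \<le> K * wt 1 (0::'a)"
    using norm_ge_zero order_trans by blast
  then show ?thesis
    using wt_pos[of 1 "0::'a"] by (auto simp: zero_le_mult_iff)
qed

lemma deriv_bound_Lop:
  fixes \<sigma> :: "nat \<Rightarrow> 'a::euclidean_space \<Rightarrow> 'a" and f :: "'a \<Rightarrow> real" and K :: real
  assumes \<sigma>: "\<And>j b. j \<le> d \<Longrightarrow> b \<in> Basis \<Longrightarrow> deriv_bound m (\<lambda>x. \<sigma> j x \<bullet> b) 1 (\<lambda>_. K)"
    and K: "0 \<le> K"
    and f: "deriv_bound (m + 2) f \<alpha> E" and E: "\<And>x. 0 \<le> E x"
  shows "deriv_bound m (Lop \<sigma> d f) \<alpha>
    (\<lambda>x. (K * 2 ^ m * DIM('a) + K\<^sup>2 * 4 ^ m * DIM('a)\<^sup>2 * d / 2) * E x)"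
proof -
  have f_C2: "Ck 2 f"
    using Ck_mono[OF deriv_boundD(1)[OF f]] by simp
  have f1: "deriv_bound (Suc m) (nder f [b]) (\<alpha> - 1) E" if "b \<in> Basis" for b
    using f that by (intro deriv_bound_nder) auto
  have f2: "deriv_bound m (nder f [b, c]) (\<alpha> - 1 - 1) E" if "b \<in> Basis" "c \<in> Basis" for b c
    using deriv_bound_nder[OF f1, of c b] that by (simp add: nder_append)
  have drift: "deriv_bound m (\<lambda>x. (\<sigma> 0 x \<bullet> b) * nder f [b] x) \<alpha> (\<lambda>x. 2 ^ m * (K * E x))"
    if "b \<in> Basis" for b
    using deriv_bound_mult[OF \<sigma> deriv_bound_mono[OF f1] K E] that by simp
  have diffusion: "deriv_bound m (\<lambda>x. ((\<sigma> l x \<bullet> b) * (\<sigma> l x \<bullet> c)) * nder f [b, c] x) \<alpha>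
      (\<lambda>x. 2 ^ m * (2 ^ m * (K * K) * E x))"
    if "l \<le> d" "b \<in> Basis" "c \<in> Basis" for l b c
    using deriv_bound_mult[OF deriv_bound_mult[OF \<sigma> \<sigma> K K] f2 _ E] K that by simp
  have "deriv_bound m (Lop \<sigma> d f) \<alpha> (\<lambda>x. (\<Sum>b\<in>(Basis::'a set). 2 ^ m * (K * E x))
      + \<bar>1/2\<bar> * (\<Sum>l=1..d. \<Sum>b\<in>(Basis::'a set). \<Sum>c\<in>(Basis::'a set). 2 ^ m * (2 ^ m * (K * K) * E x)))"
    unfolding Lop_basis_expansion[OF f_C2]
    using drift diffusion
    by (intro deriv_bound_add deriv_bound_scale deriv_bound_sum) auto
  then show ?thesis
    by (rule deriv_bound_mono)
      (simp_all add: power2_eq_square power_mult_distrib[symmetric] algebra_simps)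
qed

lemma Lop_Cspace_bounded:
  fixes \<sigma> :: "nat \<Rightarrow> 'a::euclidean_space \<Rightarrow> 'a"
  assumes W: "WR K r \<sigma> d" and m: "m \<le> r + 2"
  shows "\<exists>C\<ge>0. \<forall>f \<in> Cspace \<alpha> (m + 2).
    Lop \<sigma> d f \<in> Cspace \<alpha> m \<and> wnorm \<alpha> m (Lop \<sigma> d f) \<le> C * wnorm \<alpha> (m + 2) f"
proof -
  let ?c = "K * 2 ^ m * DIM('a) + K\<^sup>2 * 4 ^ m * DIM('a)\<^sup>2 * d / 2"
  have K: "0 \<le> K"
    using W by (rule WR_nonneg)
  have \<sigma>: "deriv_bound m (\<lambda>x. \<sigma> j x \<bullet> b) 1 (\<lambda>_. K)" if "j \<le> d" "b \<in> Basis" for j b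
    using m that by (intro deriv_bound_inner deriv_bound_mono[OF WR_deriv_bound[OF W]]) auto
  have "Lop \<sigma> d f \<in> Cspace \<alpha> m \<and> wnorm \<alpha> m (Lop \<sigma> d f) \<le> ?c * real (m + 3) * wnorm \<alpha> (m + 2) f"
    if f: "f \<in> Cspace \<alpha> (m + 2)" for f
  proof -
    have "deriv_bound m (Lop \<sigma> d f) \<alpha> (\<lambda>x. ?c * pointwise_wnorm \<alpha> (m + 2) f x)"
      using \<sigma> K Cspace_deriv_bound[OF f] pointwise_wnorm_nonneg[OF f] by (rule deriv_bound_Lop)
    from deriv_bound_imp_Cspace[OF this _ pointwise_wnorm_nonneg[OF f]
        pointwise_wnorm_le_wnorm[OF f] tendsto_pointwise_wnorm[OF f]] K
    show ?thesis
      by (simp add: algebra_simps)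
  qed
  moreover have "0 \<le> ?c * real (m + 3)"
    using K by simp
  ultimately show ?thesis
    by blast
qed

lemma Lop_Lop_Cspace_bounded:
  fixes \<sigma> :: "nat \<Rightarrow> 'a::euclidean_space \<Rightarrow> 'a"
  assumes W: "WR K r \<sigma> d"
  shows "\<exists>C\<ge>0. \<forall>f \<in> Cspace \<alpha> (r + 4).
    wnorm \<alpha> (r + 2) (Lop \<sigma> d f) + wnorm \<alpha> r (Lop \<sigma> d (Lop \<sigma> d f)) \<le> C * wnorm \<alpha> (r + 4) f"
proof -
  obtain C1 where C1: "0 \<le> C1" and L1: "\<And>f. f \<in> Cspace \<alpha> (r + 4) \<Longrightarrow>
      Lop \<sigma> d f \<in> Cspace \<alpha> (r + 2) \<and> wnorm \<alpha> (r + 2) (Lop \<sigma> d f) \<le> C1 * wnorm \<alpha> (r + 4) f"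
    using Lop_Cspace_bounded[OF W, of "r + 2" \<alpha>] by (auto simp: numeral_eq_Suc)
  obtain C2 where C2: "0 \<le> C2" and L2: "\<And>f. f \<in> Cspace \<alpha> (r + 2) \<Longrightarrow>
      wnorm \<alpha> r (Lop \<sigma> d f) \<le> C2 * wnorm \<alpha> (r + 2) f"
    using Lop_Cspace_bounded[OF W, of r \<alpha>] by auto
  have "wnorm \<alpha> (r + 2) (Lop \<sigma> d f) + wnorm \<alpha> r (Lop \<sigma> d (Lop \<sigma> d f))
      \<le> (C1 + C2 * C1) * wnorm \<alpha> (r + 4) f" if f: "f \<in> Cspace \<alpha> (r + 4)" for f
  proof -
    have "wnorm \<alpha> r (Lop \<sigma> d (Lop \<sigma> d f)) \<le> C2 * wnorm \<alpha> (r + 2) (Lop \<sigma> d f)"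
      using L1[OF f] L2 by blast
    also have "\<dots> \<le> C2 * (C1 * wnorm \<alpha> (r + 4) f)"
      using L1[OF f] C2 by (intro mult_left_mono) auto
    finally show ?thesis
      using L1[OF f] by (simp add: algebra_simps)
  qed
  with C1 C2 show ?thesis
    by (intro exI[of _ "C1 + C2 * C1"]) auto
qed

theorem lemma18:
  fixes \<alpha> :: real and r d :: nat and K :: real
    and \<sigma> :: "nat \<Rightarrow> 'a::euclidean_space \<Rightarrow> 'a"
  assumes "WR K r \<sigma> d"
  shows "\<exists>C>0. (\<forall>f \<in> Cspace \<alpha> (r + 4).
            wnorm \<alpha> (r + 2) (Lop \<sigma> d f) + wnorm \<alpha> r (Lop \<sigma> d (Lop \<sigma> d f)) \<le> C * wnorm \<alpha> (r + 4) f)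
          \<and> (\<forall>f \<in> Cspace \<alpha> (r + 2).
            Lop \<sigma> d f \<in> Cspace \<alpha> r \<and> wnorm \<alpha> r (Lop \<sigma> d f) \<le> C * wnorm \<alpha> (r + 2) f)"
proof -
  obtain C1 where C1: "0 \<le> C1" and twice: "\<forall>f \<in> Cspace \<alpha> (r + 4).
      wnorm \<alpha> (r + 2) (Lop \<sigma> d f) + wnorm \<alpha> r (Lop \<sigma> d (Lop \<sigma> d f)) \<le> C1 * wnorm \<alpha> (r + 4) f"
    using Lop_Lop_Cspace_bounded[OF assms] by blast
  obtain C2 where C2: "0 \<le> C2" and once: "\<forall>f \<in> Cspace \<alpha> (r + 2).
      Lop \<sigma> d f \<in> Cspace \<alpha> r \<and> wnorm \<alpha> r (Lop \<sigma> d f) \<le> C2 * wnorm \<alpha> (r + 2) f"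
    using Lop_Cspace_bounded[OF assms, of r] by auto
  show ?thesis
  proof (intro exI[of _ "1 + C1 + C2"] conjI ballI)
    fix f :: "'a \<Rightarrow> real"
    assume f: "f \<in> Cspace \<alpha> (r + 4)"
    have "C1 * wnorm \<alpha> (r + 4) f \<le> (1 + C1 + C2) * wnorm \<alpha> (r + 4) f"
      using C2 wnorm_nonneg[OF f] by (intro mult_right_mono) auto
    with twice f show "wnorm \<alpha> (r + 2) (Lop \<sigma> d f) + wnorm \<alpha> r (Lop \<sigma> d (Lop \<sigma> d f))
        \<le> (1 + C1 + C2) * wnorm \<alpha> (r + 4) f"
      by fastforce
  next
    fix f :: "'a \<Rightarrow> real"
    assume f: "f \<in> Cspace \<alpha> (r + 2)"
    show "Lop \<sigma> d f \<in> Cspace \<alpha> r"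
      using once f by blast
    have "C2 * wnorm \<alpha> (r + 2) f \<le> (1 + C1 + C2) * wnorm \<alpha> (r + 2) f"
      using C1 wnorm_nonneg[OF f] by (intro mult_right_mono) auto
    with once f show "wnorm \<alpha> r (Lop \<sigma> d f) \<le> (1 + C1 + C2) * wnorm \<alpha> (r + 2) f"
      by fastforce
  qed (use C1 C2 in simp)
qed

end
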